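(* Let $\eta_0\in[0,1]$ and let $p(X_i,X_j|M_{ij},P)$, for $(ij)\in\{(12),(23),(13)\}$ and $X_i,X_j\in\{0,1\}$, be arbitrary probability distributions on $\{0,1\}^2$; set $w_{12}=p(X_1\neq X_2|M_{12},P)$, $w_{23}=p(X_2\neq X_3|M_{23},P)$, $w_{13}=p(X_1\neq X_3|M_{13},P)$. Then at most one of the following four inequalities can hold: $w_{12}+w_{23}+w_{13}>3-\eta_0$; $w_{12}-w_{23}-w_{13}>1-\eta_0$; $w_{23}-w_{13}-w_{12}>1-\eta_0$; $w_{13}-w_{12}-w_{23}>1-\eta_0$. That is, no such set of distributions violates two of the four noncontextuality inequalities $R_3\le 3-\eta_0$, $R_0\le 1-\eta_0$, $R_1\le1-\eta_0$, $R_2\le 1-\eta_0$ simultaneously.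
   Context: Here $p(X_i\neq X_j|M_{ij},P)=p(0,1|M_{ij},P)+p(1,0|M_{ij},P)$ is the probability of anticorrelated outcomes in the joint measurement $M_{ij}$, and $R_3=w_{12}+w_{23}+w_{13}$, $R_0=w_{12}-w_{23}-w_{13}$, $R_1=w_{23}-w_{13}-w_{12}$, $R_2=w_{13}-w_{12}-w_{23}$. The number $\eta_0$ plays the role of the common predictability of the three binary measurements. *)

theory Defs
  imports "HOL-Probability.Probability_Mass_Function"
begin

text \<open>Outcomes of a joint measurement M_ij are pairs (X_i, X_j) in {0,1}^2, encoded as
  bool \<times> bool (False = 0, True = 1).\<close>

definition anticorr :: "(bool \<times> bool) pmf \<Rightarrow> real" where
  "anticorr p = measure_pmf.prob p {x. fst x \<noteq> snd x}"

end

theory Submission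
  imports Defs
begin

text \<open>Only the bounds \<open>0 \<le> w\<^sub>i\<^sub>j \<le> 1\<close> matter. Adding two of the inequalities gives a
  contradiction: \<open>R\<^sub>3 + R\<^sub>k = 2w \<le> 2\<close> for one of the \<open>w\<^sub>i\<^sub>j\<close>, against \<open>R\<^sub>3 + R\<^sub>k > 4 - 2\<eta>\<^sub>0 \<ge> 2\<close>;
  and \<open>R\<^sub>k + R\<^sub>l = -2w \<le> 0\<close> for \<open>k, l < 3\<close>, against \<open>R\<^sub>k + R\<^sub>l > 2 - 2\<eta>\<^sub>0 \<ge> 0\<close>.\<close>

lemma anticorr_nonneg: "0 \<le> anticorr p"
  unfolding anticorr_def by simp

lemma anticorr_le_one: "anticorr p \<le> 1"
  unfolding anticorr_def by simp

lemma length_filter_id_le_one_if_pairwise_exclusive: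
  assumes "\<And>i j. i < length bs \<Longrightarrow> j < length bs \<Longrightarrow> i \<noteq> j \<Longrightarrow> \<not> (bs ! i \<and> bs ! j)"
  shows "length (filter id bs) \<le> 1"
  using assms
proof (induction bs)
  case Nil
  then show ?case by simp
next
  case (Cons b bs)
  have tail: "length (filter id bs) \<le> 1"
    using Cons.prems by (intro Cons.IH) (metis Suc_less_eq nat.inject nth_Cons_Suc length_Cons)
  show ?case
  proof (cases b)
    case True
    have "\<not> bs ! j" if "j < length bs" for j
      using Cons.prems[of 0 "Suc j"] that True by simp
    then have "filter id bs = []"
      by (auto simp: filter_empty_conv in_set_conv_nth)
    then show ?thesis using True by (simp add: id_def)
  qed (use tail in \<open>simp add: id_def\<close>)
qed

lemma noncontextuality_violations_pairwise_exclusive: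
  fixes \<eta>0 w12 w23 w13 :: real
  assumes "\<eta>0 \<le> 1"
    and "0 \<le> w12" "w12 \<le> 1" "0 \<le> w23" "w23 \<le> 1" "0 \<le> w13" "w13 \<le> 1"
  defines "bs \<equiv> [w12 + w23 + w13 > 3 - \<eta>0,
                 w12 - w23 - w13 > 1 - \<eta>0,
                 w23 - w13 - w12 > 1 - \<eta>0,
                 w13 - w12 - w23 > 1 - \<eta>0]"
  assumes "i < length bs" "j < length bs" "i \<noteq> j"
  shows "\<not> (bs ! i \<and> bs ! j)"
proof -
  have "i < 4" "j < 4" using assms(9,10) by (simp_all add: bs_def)
  then show ?thesis
    using assms(1-7) \<open>i \<noteq> j\<close> unfolding bs_def
    by (auto simp: less_Suc_eq numeral_eq_Suc)
qed

theorem mainTheorem5: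
  fixes \<eta>0 :: real and p12 p23 p13 :: "(bool \<times> bool) pmf"
  assumes "0 \<le> \<eta>0" and "\<eta>0 \<le> 1"
  defines "w12 \<equiv> anticorr p12" and "w23 \<equiv> anticorr p23" and "w13 \<equiv> anticorr p13"
  shows "length (filter id
           [w12 + w23 + w13 > 3 - \<eta>0,
            w12 - w23 - w13 > 1 - \<eta>0,
            w23 - w13 - w12 > 1 - \<eta>0,
            w13 - w12 - w23 > 1 - \<eta>0]) \<le> 1"
  by (intro length_filter_id_le_one_if_pairwise_exclusive
        noncontextuality_violations_pairwise_exclusive)
     (simp_all add: assms(2) w12_def w23_def w13_def anticorr_nonneg anticorr_le_one)

end
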